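(* Consider the model without monotonicity, parametrized by $\boldsymbol{\xi}=(\boldsymbol{p},\boldsymbol{\alpha},\boldsymbol{\pi},\boldsymbol{\delta})$ ranging over the open set $\Xi$ where $\boldsymbol{p}=(p_1,\dots,p_{N_R})$ lies in the open probability simplex, $\alpha_r\in(0,1)$ for each $r$, $\boldsymbol{\pi}_r=(\pi_{ss,r},\pi_{s\bar{s},r},\pi_{\bar{s}\bar{s},r},\pi_{\bar{s}s,r})$ lies in the open probability simplex for each $r$, and $\delta_{zu}\in(0,1)$ for $z\in\{0,1\}$, $u\in\{ss,s\bar{s},\bar{s}\bar{s},\bar{s}s\}$ (so $\Xi$ has dimension $5N_R+7$). Let $f:\Xi\to\mathbb{R}^{8N_R}$ map $\boldsymbol{\xi}$ to the observed cell probabilities $$P(R=r,Z=z,S=s,Y=y)=p_r\,\alpha_r^{z}(1-\alpha_r)^{1-z}\sum_{u\in O(z,s)}\pi_{ur}\,\delta_{zu}^{y}(1-\delta_{zu})^{1-y},$$ for $r\in\{1,\dots,N_R\}$, $z,s,y\in\{0,1\}$. If $N_R\le 2$, then $\boldsymbol{\xi}$ is not locally identifiable at any $\boldsymbol{\xi}_0\in\Xi$: every neighborhood of $\boldsymbol{\xi}_0$ contains some $\boldsymbol{\xi}\neq\boldsymbol{\xi}_0$ with $f(\boldsymbol{\xi})=f(\boldsymbol{\xi}_0)$. Consequently $N_R\ge 3$ is necessary for local identifiability.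
   Context: This parametrization is the joint distribution of $(R,Z,U,Y)$ implied by Assumption 1 (randomization: $Z\perp\!\!\!\perp\{S(1),S(0),Y(1),Y(0)\}\mid R$) and Assumption 3 (homogeneity: $R\perp\!\!\!\perp Y(z)\mid U$), with $p_r=P(R=r)$, $\alpha_r=P(Z=1\mid R=r)$, $\pi_{ur}=P(U=u\mid R=r)$, $\delta_{zu}=P(Y=1\mid Z=z,U=u)$. Here $U=(S(1),S(0))$ with values $(1,1),(1,0),(0,1),(0,0)$ labeled $ss,s\bar{s},\bar{s}s,\bar{s}\bar{s}$, and $S=S(Z)$. $O(z,s)$ is the set of strata compatible with observing $Z=z,S=s$: $O(1,1)=\{ss,s\bar{s}\}$, $O(1,0)=\{\bar{s}\bar{s},\bar{s}s\}$, $O(0,1)=\{ss,\bar{s}s\}$, $O(0,0)=\{s\bar{s},\bar{s}\bar{s}\}$. The observed cell probabilities sum to one, so they lie in an affine space of dimension $8N_R-1$. *)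

theory Defs
  imports Complex_Main
begin

text \<open>Principal strata U = (S(1),S(0)): ss, s sbar, sbar sbar, sbar s.\<close>
datatype stratum = SS | SSb | SbSb | SbS

fun Ostr :: "nat \<Rightarrow> nat \<Rightarrow> stratum set" where
  "Ostr z s = (if z = 1 then (if s = 1 then {SS, SSb} else {SbSb, SbS})
               else (if s = 1 then {SS, SbS} else {SSb, SbSb}))"

text \<open>Coordinates of the parameter xi = (p, alpha, pi, delta).\<close>
datatype coord = Pc nat | Ac nat | Pic stratum nat | Dc nat stratum

text \<open>The coordinates actually used when there are N strata of R (r = 1..N).\<close>
definition coords :: "nat \<Rightarrow> coord set" where
  "coords N = Pc ` {1..N} \<union> Ac ` {1..N} \<union> {Pic u r | u r. r \<in> {1..N}}
              \<union> {Dc z u | z u. z \<in> {0,1}}"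

definition Xi :: "nat \<Rightarrow> (coord \<Rightarrow> real) set" where
  "Xi N = {xi.
     (\<forall>r\<in>{1..N}. xi (Pc r) > 0) \<and> (\<Sum>r=1..N. xi (Pc r)) = 1 \<and>
     (\<forall>r\<in>{1..N}. 0 < xi (Ac r) \<and> xi (Ac r) < 1) \<and>
     (\<forall>r\<in>{1..N}. (\<forall>u. xi (Pic u r) > 0) \<and> (\<Sum>u\<in>UNIV. xi (Pic u r)) = 1) \<and>
     (\<forall>z\<in>{0,1}. \<forall>u. 0 < xi (Dc z u) \<and> xi (Dc z u) < 1)}"

definition cellprob :: "(coord \<Rightarrow> real) \<Rightarrow> nat \<Rightarrow> nat \<Rightarrow> nat \<Rightarrow> nat \<Rightarrow> real" where
  "cellprob xi r z s y =
     xi (Pc r) * xi (Ac r) ^ z * (1 - xi (Ac r)) ^ (1 - z) *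
     (\<Sum>u\<in>Ostr z s. xi (Pic u r) * xi (Dc z u) ^ y * (1 - xi (Dc z u)) ^ (1 - y))"

definition same_obs :: "nat \<Rightarrow> (coord \<Rightarrow> real) \<Rightarrow> (coord \<Rightarrow> real) \<Rightarrow> bool" where
  "same_obs N xi xi' = (\<forall>r\<in>{1..N}. \<forall>z\<in>{0,1}. \<forall>s\<in>{0,1}. \<forall>y\<in>{0,1}.
      cellprob xi r z s y = cellprob xi' r z s y)"

definition locally_identifiable :: "nat \<Rightarrow> (coord \<Rightarrow> real) \<Rightarrow> bool" where
  "locally_identifiable N xi0 = (\<exists>e>0. \<forall>xi\<in>Xi N.
      (\<forall>c\<in>coords N. \<bar>xi c - xi0 c\<bar> < e) \<and> same_obs N xi xi0 \<longrightarrow>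
      (\<forall>c\<in>coords N. xi c = xi0 c))"

end

theory Submission
  imports Defs
begin

text \<open>The cell probabilities depend on \<open>\<xi>\<close> only through \<open>p r\<close>, \<open>\<alpha> r\<close> and, for every \<open>r\<close>
  and \<open>(z, s)\<close>, the mass \<open>\<Sum>u\<in>O(z,s). \<pi> u r\<close> and the response mass
  \<open>\<Sum>u\<in>O(z,s). \<pi> u r * \<delta> z u\<close>. For \<open>N \<le> 2\<close> there is a nonconstant curve through \<open>\<xi>\<^sub>0\<close>
  keeping all of these fixed.

  If for some pair \<open>O(z,s) = {u, u'}\<close> the vectors \<open>(\<pi> u r)\<^sub>r\<close> and \<open>(\<pi> u' r)\<^sub>r\<close> are
  proportional (automatic when \<open>N = 1\<close>), moving \<open>\<delta> z u\<close> by \<open>\<epsilon> * \<pi> u' 1\<close> and \<open>\<delta> z u'\<close> by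
  \<open>-\<epsilon> * \<pi> u 1\<close> leaves every response mass unchanged. Otherwise shift \<open>\<pi> _ 1\<close> by
  \<open>+\<epsilon>, -\<epsilon>, +\<epsilon>, -\<epsilon>\<close> around the cycle \<open>SS, SSb, SbSb, SbS\<close>: each \<open>O(z,s)\<close> consists of
  two neighbours on this cycle, so all masses are preserved. The response masses are then
  restored pair by pair by moving \<open>(\<delta> z u, \<delta> z u')\<close> along \<open>(\<pi> u' 2, -\<pi> u 2)\<close>, which
  keeps the \<open>r = 2\<close> response mass; at \<open>r = 1\<close> the required step solves a linear equation
  whose coefficient tends to the determinant \<open>\<pi> u 1 * \<pi> u' 2 - \<pi> u' 1 * \<pi> u 2 \<noteq> 0\<close>,
  so the step tends to \<open>0\<close> with \<open>\<epsilon>\<close>.\<close>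

lemma UNIV_stratum: "(UNIV :: stratum set) = {SS, SSb, SbSb, SbS}"
  using stratum.exhaust by auto

lemma finite_coords: "finite (coords N)"
proof -
  have "{Pic u r | u r. r \<in> {1..N}} = (\<lambda>(u, r). Pic u r) ` (UNIV \<times> {1..N})"
       "{Dc z u | z u. z \<in> {0::nat, 1}} = (\<lambda>(z, u). Dc z u) ` ({0, 1} \<times> UNIV)"
    by auto
  then show ?thesis
    unfolding coords_def by (simp add: UNIV_stratum)
qed

lemma Xi_imp_one_le: "xi0 \<in> Xi N \<Longrightarrow> 1 \<le> N"
  unfolding Xi_def by (cases N) auto

lemma Ostr_disjoint: "z \<in> {0, 1} \<Longrightarrow> s \<in> {0, 1} \<Longrightarrow> s' \<in> {0, 1} \<Longrightarrow> s \<noteq> s' \<Longrightarrow> Ostr z s \<inter> Ostr z s' = {}"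
  by auto

lemma tendsto_fun_upd:
  "((\<lambda>x. g x d) \<longlongrightarrow> (l d)) F \<Longrightarrow> (f \<longlongrightarrow> (l c)) F \<Longrightarrow> ((\<lambda>x. ((g x)(c := f x)) d) \<longlongrightarrow> (l d)) F"
  by (cases "d = c") simp_all

definition stratum_mass :: "(coord \<Rightarrow> real) \<Rightarrow> nat \<Rightarrow> nat \<Rightarrow> nat \<Rightarrow> real" where
  "stratum_mass xi r z s = (\<Sum>u\<in>Ostr z s. xi (Pic u r))"

definition response_mass :: "(coord \<Rightarrow> real) \<Rightarrow> nat \<Rightarrow> nat \<Rightarrow> nat \<Rightarrow> real" where
  "response_mass xi r z s = (\<Sum>u\<in>Ostr z s. xi (Pic u r) * xi (Dc z u))"

lemma cellprob_eq_masses: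
  assumes "y \<in> {0, 1}"
  shows "cellprob xi r z s y = xi (Pc r) * xi (Ac r) ^ z * (1 - xi (Ac r)) ^ (1 - z) *
    (if y = 1 then response_mass xi r z s else stratum_mass xi r z s - response_mass xi r z s)"
  using assms
  by (auto simp: cellprob_def stratum_mass_def response_mass_def right_diff_distrib sum_subtractf)

lemma same_obs_if_masses_agree:
  assumes "\<And>r. r \<in> {1..N} \<Longrightarrow> X (Pc r) = xi0 (Pc r) \<and> X (Ac r) = xi0 (Ac r)"
    and "\<And>r z s. r \<in> {1..N} \<Longrightarrow> z \<in> {0, 1} \<Longrightarrow> s \<in> {0, 1} \<Longrightarrow>
      stratum_mass X r z s = stratum_mass xi0 r z s \<and> response_mass X r z s = response_mass xi0 r z s"
  shows "same_obs N X xi0"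
  unfolding same_obs_def using assms by (simp add: cellprob_eq_masses)

lemma eventually_in_Xi:
  fixes X :: "real \<Rightarrow> coord \<Rightarrow> real"
  assumes xi0: "xi0 \<in> Xi N"
    and tendsto: "\<And>c. ((\<lambda>\<epsilon>. X \<epsilon> c) \<longlongrightarrow> xi0 c) (at 0)"
    and Pc: "\<And>\<epsilon> r. X \<epsilon> (Pc r) = xi0 (Pc r)"
    and Pic_sum: "\<And>\<epsilon> r. (\<Sum>u\<in>UNIV. X \<epsilon> (Pic u r)) = (\<Sum>u\<in>UNIV. xi0 (Pic u r))"
  shows "\<forall>\<^sub>F \<epsilon> in at 0. X \<epsilon> \<in> Xi N"
proof -
  have "\<forall>\<^sub>F \<epsilon> in at 0. (0 < xi0 c \<longrightarrow> 0 < X \<epsilon> c) \<and> (xi0 c < 1 \<longrightarrow> X \<epsilon> c < 1)" for c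
    using order_tendstoD[OF tendsto[of c]] by (auto simp: eventually_conj_iff)
  then have "\<forall>\<^sub>F \<epsilon> in at 0. \<forall>c\<in>coords N. (0 < xi0 c \<longrightarrow> 0 < X \<epsilon> c) \<and> (xi0 c < 1 \<longrightarrow> X \<epsilon> c < 1)"
    by (simp add: eventually_ball_finite finite_coords)
  then show ?thesis
  proof (rule eventually_mono)
    fix \<epsilon> assume "\<forall>c\<in>coords N. (0 < xi0 c \<longrightarrow> 0 < X \<epsilon> c) \<and> (xi0 c < 1 \<longrightarrow> X \<epsilon> c < 1)"
    then show "X \<epsilon> \<in> Xi N"
      using xi0 unfolding Xi_def coords_def by (auto simp: Pc Pic_sum)
  qed
qed

lemma not_locally_identifiable_if_curve:
  fixes X :: "real \<Rightarrow> coord \<Rightarrow> real"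
  assumes xi0: "xi0 \<in> Xi N"
    and tendsto: "\<And>c. ((\<lambda>\<epsilon>. X \<epsilon> c) \<longlongrightarrow> xi0 c) (at 0)"
    and Pc: "\<And>\<epsilon> r. X \<epsilon> (Pc r) = xi0 (Pc r)"
    and Pic_sum: "\<And>\<epsilon> r. (\<Sum>u\<in>UNIV. X \<epsilon> (Pic u r)) = (\<Sum>u\<in>UNIV. xi0 (Pic u r))"
    and obs: "\<forall>\<^sub>F \<epsilon> in at 0. same_obs N (X \<epsilon>) xi0"
    and moves: "\<forall>\<^sub>F \<epsilon> in at 0. \<exists>c\<in>coords N. X \<epsilon> c \<noteq> xi0 c"
  shows "\<not> locally_identifiable N xi0"
  unfolding locally_identifiable_def
proof
  assume "\<exists>e>0. \<forall>xi\<in>Xi N. (\<forall>c\<in>coords N. \<bar>xi c - xi0 c\<bar> < e) \<and> same_obs N xi xi0 \<longrightarrow>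
      (\<forall>c\<in>coords N. xi c = xi0 c)"
  then obtain e where "e > 0" and ident: "\<And>xi. xi \<in> Xi N \<Longrightarrow>
      \<forall>c\<in>coords N. \<bar>xi c - xi0 c\<bar> < e \<Longrightarrow> same_obs N xi xi0 \<Longrightarrow> \<forall>c\<in>coords N. xi c = xi0 c"
    by blast
  have "\<forall>\<^sub>F \<epsilon> in at 0. \<bar>X \<epsilon> c - xi0 c\<bar> < e" for c
    using tendstoD[OF tendsto \<open>e > 0\<close>] by (simp add: dist_real_def)
  then have close: "\<forall>\<^sub>F \<epsilon> in at 0. \<forall>c\<in>coords N. \<bar>X \<epsilon> c - xi0 c\<bar> < e"
    by (simp add: eventually_ball_finite finite_coords)
  from eventually_in_Xi[OF xi0 tendsto Pc Pic_sum] close obs moves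
  have "\<forall>\<^sub>F \<epsilon> in at (0::real). False"
    by eventually_elim (use ident in blast)
  then show False
    by simp
qed

lemma pair_compensation:
  fixes q q' w w' a b :: real
  assumes "q * w' \<noteq> q' * w"
  obtains k :: "real \<Rightarrow> real" where "(k \<longlongrightarrow> 0) (at 0)"
    and "\<forall>\<^sub>F t in at 0. (q + t) * (a + w' * k t) + (q' - t) * (b - w * k t) = q * a + q' * b"
proof -
  define D where "D t = q * w' - q' * w + t * (w + w')" for t
  define k where "k t = - t * (a - b) / D t" for t
  have D: "(D \<longlongrightarrow> D 0) (at 0)"
    unfolding D_def by (intro tendsto_intros)
  moreover have "D 0 \<noteq> 0"
    using assms by (simp add: D_def)
  ultimately have D_ne: "\<forall>\<^sub>F t in at 0. D t \<noteq> 0"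
    using tendsto_imp_eventually_ne by blast
  have "((\<lambda>t. - t * (a - b) / D t) \<longlongrightarrow> - 0 * (a - b) / D 0) (at 0)"
    using D \<open>D 0 \<noteq> 0\<close> by (intro tendsto_intros)
  then have "(k \<longlongrightarrow> 0) (at 0)"
    by (simp add: k_def [abs_def])
  moreover have "\<forall>\<^sub>F t in at 0. (q + t) * (a + w' * k t) + (q' - t) * (b - w * k t) = q * a + q' * b"
    using D_ne
  proof eventually_elim
    fix t assume "D t \<noteq> 0"
    then have "k t * D t = - t * (a - b)"
      by (simp add: k_def)
    then show "(q + t) * (a + w' * k t) + (q' - t) * (b - w * k t) = q * a + q' * b"
      unfolding D_def by algebra
  qed
  ultimately show thesis
    using that by blast
qed

lemma not_locally_identifiable_if_proportional:
  assumes xi0: "xi0 \<in> Xi N"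
    and zs: "z \<in> {0, 1}" "s \<in> {0, 1}" and O: "Ostr z s = {u, u'}" "u \<noteq> u'"
    and proportional: "\<And>r. r \<in> {1..N} \<Longrightarrow> xi0 (Pic u r) * xi0 (Pic u' 1) = xi0 (Pic u' r) * xi0 (Pic u 1)"
  shows "\<not> locally_identifiable N xi0"
proof -
  define X where "X \<epsilon> = xi0(Dc z u := xi0 (Dc z u) + \<epsilon> * xi0 (Pic u' 1),
    Dc z u' := xi0 (Dc z u') - \<epsilon> * xi0 (Pic u 1))" for \<epsilon> :: real
  have "0 < xi0 (Pic u' 1)"
    using xi0 Xi_imp_one_le[OF xi0] unfolding Xi_def by auto
  show ?thesis
  proof (rule not_locally_identifiable_if_curve[OF xi0])
    show "((\<lambda>\<epsilon>. X \<epsilon> c) \<longlongrightarrow> xi0 c) (at 0)" for c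
      unfolding X_def by (intro tendsto_fun_upd tendsto_const) (auto intro!: tendsto_eq_intros)
    show "\<forall>\<^sub>F \<epsilon> in at 0. same_obs N (X \<epsilon>) xi0"
    proof (intro always_eventually allI same_obs_if_masses_agree conjI)
      show "stratum_mass (X \<epsilon>) r z' s' = stratum_mass xi0 r z' s'" for \<epsilon> r z' s'
        by (simp add: X_def stratum_mass_def)
      show "response_mass (X \<epsilon>) r z' s' = response_mass xi0 r z' s'"
        if r: "r \<in> {1..N}" and z': "z' \<in> {0, 1}" and s': "s' \<in> {0, 1}" for \<epsilon> r z' s'
      proof (cases "z' = z \<and> s' = s")
        case True
        have "xi0 (Pic u r) * (\<epsilon> * xi0 (Pic u' 1)) = xi0 (Pic u' r) * (\<epsilon> * xi0 (Pic u 1))"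
          using proportional[OF r] by (simp add: algebra_simps)
        with True O show ?thesis
          by (simp add: X_def response_mass_def algebra_simps)
      next
        case False
        have "u \<notin> Ostr z' s' \<and> u' \<notin> Ostr z' s'" if "z' = z"
          using Ostr_disjoint[OF zs s'] False O that by auto
        then show ?thesis
          unfolding response_mass_def by (intro sum.cong) (auto simp: X_def)
      qed
    qed (simp_all add: X_def)
    show "\<forall>\<^sub>F \<epsilon> in at 0. \<exists>c\<in>coords N. X \<epsilon> c \<noteq> xi0 c"
    proof (rule eventually_mono[OF eventually_neq_at_within[of 0 0]])
      fix \<epsilon> :: real assume "\<epsilon> \<noteq> 0"
      then have "X \<epsilon> (Dc z u) \<noteq> xi0 (Dc z u)"
        using \<open>0 < xi0 (Pic u' 1)\<close> O(2) by (simp add: X_def)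
      moreover have "Dc z u \<in> coords N"
        using zs unfolding coords_def by blast
      ultimately show "\<exists>c\<in>coords N. X \<epsilon> c \<noteq> xi0 c"
        by blast
    qed
  qed (simp_all add: X_def)
qed

lemma not_locally_identifiable_two_groups:
  assumes xi0: "xi0 \<in> Xi 2"
    and nonproportional: "\<And>z s u u'. z \<in> {0, 1} \<Longrightarrow> s \<in> {0, 1} \<Longrightarrow> Ostr z s = {u, u'} \<Longrightarrow> u \<noteq> u' \<Longrightarrow>
      xi0 (Pic u 1) * xi0 (Pic u' 2) \<noteq> xi0 (Pic u' 1) * xi0 (Pic u 2)"
  shows "\<not> locally_identifiable 2 xi0"
proof -
  let ?p = "\<lambda>u r. xi0 (Pic u r)" and ?d = "\<lambda>z u. xi0 (Dc z u)"
  have compensation: "\<exists>k. (k \<longlongrightarrow> 0) (at 0) \<and> (\<forall>\<^sub>F t in at 0.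
      (?p u 1 + t) * (?d z u + ?p u' 2 * k t) + (?p u' 1 - t) * (?d z u' - ?p u 2 * k t)
      = ?p u 1 * ?d z u + ?p u' 1 * ?d z u')"
    if "z \<in> {0, 1}" "s \<in> {0, 1}" "Ostr z s = {u, u'}" "u \<noteq> u'" for z s u u'
    by (rule pair_compensation[where q = "?p u 1" and q' = "?p u' 1" and w = "?p u 2" and w' = "?p u' 2"
        and a = "?d z u" and b = "?d z u'"]) (use nonproportional[OF that] in auto)
  obtain k1 where
    k1: "(k1 \<longlongrightarrow> 0) (at 0)" "\<forall>\<^sub>F t in at 0. (?p SS 1 + t) * (?d 1 SS + ?p SSb 2 * k1 t)
      + (?p SSb 1 - t) * (?d 1 SSb - ?p SS 2 * k1 t) = ?p SS 1 * ?d 1 SS + ?p SSb 1 * ?d 1 SSb"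
    using compensation[of 1 1 SS SSb] by auto
  obtain k2 where
    k2: "(k2 \<longlongrightarrow> 0) (at 0)" "\<forall>\<^sub>F t in at 0. (?p SbSb 1 + t) * (?d 1 SbSb + ?p SbS 2 * k2 t)
      + (?p SbS 1 - t) * (?d 1 SbS - ?p SbSb 2 * k2 t) = ?p SbSb 1 * ?d 1 SbSb + ?p SbS 1 * ?d 1 SbS"
    using compensation[of 1 0 SbSb SbS] by auto
  obtain k3 where
    k3: "(k3 \<longlongrightarrow> 0) (at 0)" "\<forall>\<^sub>F t in at 0. (?p SS 1 + t) * (?d 0 SS + ?p SbS 2 * k3 t)
      + (?p SbS 1 - t) * (?d 0 SbS - ?p SS 2 * k3 t) = ?p SS 1 * ?d 0 SS + ?p SbS 1 * ?d 0 SbS"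
    using compensation[of 0 1 SS SbS] by auto
  obtain k4 where
    k4: "(k4 \<longlongrightarrow> 0) (at 0)" "\<forall>\<^sub>F t in at 0. (?p SbSb 1 + t) * (?d 0 SbSb + ?p SSb 2 * k4 t)
      + (?p SSb 1 - t) * (?d 0 SSb - ?p SbSb 2 * k4 t) = ?p SbSb 1 * ?d 0 SbSb + ?p SSb 1 * ?d 0 SSb"
    using compensation[of 0 0 SbSb SSb] by auto
  define X where "X \<epsilon> = xi0(
      Pic SS 1 := ?p SS 1 + \<epsilon>, Pic SSb 1 := ?p SSb 1 - \<epsilon>,
      Pic SbSb 1 := ?p SbSb 1 + \<epsilon>, Pic SbS 1 := ?p SbS 1 - \<epsilon>,
      Dc 1 SS := ?d 1 SS + ?p SSb 2 * k1 \<epsilon>, Dc 1 SSb := ?d 1 SSb - ?p SS 2 * k1 \<epsilon>,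
      Dc 1 SbSb := ?d 1 SbSb + ?p SbS 2 * k2 \<epsilon>, Dc 1 SbS := ?d 1 SbS - ?p SbSb 2 * k2 \<epsilon>,
      Dc 0 SS := ?d 0 SS + ?p SbS 2 * k3 \<epsilon>, Dc 0 SbS := ?d 0 SbS - ?p SS 2 * k3 \<epsilon>,
      Dc 0 SbSb := ?d 0 SbSb + ?p SSb 2 * k4 \<epsilon>, Dc 0 SSb := ?d 0 SSb - ?p SbSb 2 * k4 \<epsilon>)"
    for \<epsilon> :: real
  show ?thesis
  proof (rule not_locally_identifiable_if_curve[OF xi0])
    show "((\<lambda>\<epsilon>. X \<epsilon> c) \<longlongrightarrow> xi0 c) (at 0)" for c
      unfolding X_def by (intro tendsto_fun_upd tendsto_const) (auto intro!: tendsto_eq_intros k1 k2 k3 k4)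
    show "\<forall>\<^sub>F \<epsilon> in at 0. same_obs 2 (X \<epsilon>) xi0"
      using k1(2) k2(2) k3(2) k4(2)
    proof eventually_elim
      case (elim \<epsilon>)
      show ?case
      proof (rule same_obs_if_masses_agree)
        fix r z s :: nat assume "r \<in> {1..2}" "z \<in> {0, 1}" "s \<in> {0, 1}"
        then have "r = 1 \<or> r = 2" by auto
        with \<open>z \<in> {0, 1}\<close> \<open>s \<in> {0, 1}\<close>
        show "stratum_mass (X \<epsilon>) r z s = stratum_mass xi0 r z s \<and>
            response_mass (X \<epsilon>) r z s = response_mass xi0 r z s"
          using elim by (elim disjE insertE emptyE)
            (simp_all add: X_def stratum_mass_def response_mass_def algebra_simps)
      qed (simp add: X_def)
    qed
    show "\<forall>\<^sub>F \<epsilon> in at 0. \<exists>c\<in>coords 2. X \<epsilon> c \<noteq> xi0 c"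
    proof (rule eventually_mono[OF eventually_neq_at_within[of 0 0]])
      fix \<epsilon> :: real assume "\<epsilon> \<noteq> 0"
      then have "X \<epsilon> (Pic SS 1) \<noteq> xi0 (Pic SS 1)"
        by (simp add: X_def)
      moreover have "Pic SS 1 \<in> coords 2"
        unfolding coords_def by auto
      ultimately show "\<exists>c\<in>coords 2. X \<epsilon> c \<noteq> xi0 c"
        by blast
    qed
  qed (simp_all add: X_def UNIV_stratum)
qed

theorem proposition2:
  fixes N :: nat and xi0 :: "coord \<Rightarrow> real"
  assumes "N \<le> 2" and "xi0 \<in> Xi N"
  shows "\<not> locally_identifiable N xi0"
proof -
  have "N = 1 \<or> N = 2"
    using Xi_imp_one_le[OF assms(2)] assms(1) by auto
  then show ?thesis
  proof
    assume "N = 1"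
    show ?thesis
      by (rule not_locally_identifiable_if_proportional[OF assms(2), of 1 1 SS SSb])
        (use \<open>N = 1\<close> in auto)
  next
    assume "N = 2"
    show ?thesis
    proof (cases "\<exists>z s u u'. z \<in> {0, 1} \<and> s \<in> {0, 1} \<and> Ostr z s = {u, u'} \<and> u \<noteq> u' \<and>
        xi0 (Pic u 1) * xi0 (Pic u' 2) = xi0 (Pic u' 1) * xi0 (Pic u 2)")
      case True
      then obtain z s u u' where pair: "z \<in> {0, 1}" "s \<in> {0, 1}" "Ostr z s = {u, u'}" "u \<noteq> u'"
        and cross: "xi0 (Pic u 1) * xi0 (Pic u' 2) = xi0 (Pic u' 1) * xi0 (Pic u 2)"
        by blast
      have "xi0 (Pic u r) * xi0 (Pic u' 1) = xi0 (Pic u' r) * xi0 (Pic u 1)" if "r \<in> {1..N}" for r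
      proof -
        have "r = 1 \<or> r = 2"
          using that \<open>N = 2\<close> by auto
        then show ?thesis
          using cross by (elim disjE) (simp_all add: ac_simps)
      qed
      then show ?thesis
        by (rule not_locally_identifiable_if_proportional[OF assms(2) pair])
    next
      case False
      then have "xi0 (Pic u 1) * xi0 (Pic u' 2) \<noteq> xi0 (Pic u' 1) * xi0 (Pic u 2)"
        if "z \<in> {0, 1}" "s \<in> {0, 1}" "Ostr z s = {u, u'}" "u \<noteq> u'" for z s u u'
        using that by blast
      with assms(2) show ?thesis
        unfolding \<open>N = 2\<close> by (rule not_locally_identifiable_two_groups)
    qed
  qed
qed

end
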